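(* Let $\mathcal{S}\subseteq\mathcal{X}\times\mathcal{Y}$, $f:\mathcal{X}\times\mathcal{Y}\to\mathcal{V}$, and suppose $\mathcal{A}\times\mathcal{B}\subseteq\mathcal{X}\times\mathcal{Y}$ is solvable for $(\mathcal{S},f)$. Then for any $n$, $\mathbf{x}\in\mathcal{A}^n$, $\mathbf{y}\in\mathcal{B}^n$ with $(x_i,y_i)\in\mathcal{S}$ for all $i$, the type $f_n^{\mathsf t}(\mathbf{x},\mathbf{y})$ is uniquely determined by $P_{\mathbf{x}}$ and $P_{\mathbf{y}}$. More precisely, any two joint types $P^{(1)},P^{(2)}\in\mathcal{P}_n(\mathcal{A}\times\mathcal{B})$ with $\mathsf{supp}(P^{(j)})\subseteq\mathcal{S}$ and $\sum_{y\in\mathcal{B}}P^{(j)}(x,y)=P_{\mathbf{x}}(x)$ for all $x\in\mathcal{A}$, $\sum_{x\in\mathcal{A}}P^{(j)}(x,y)=P_{\mathbf{y}}(y)$ for all $y\in\mathcal{B}$ ($j=1,2$) satisfy $$\sum_{(x,y)\in\mathcal{A}\times\mathcal{B}:f(x,y)=v}P^{(1)}(x,y)=\sum_{(x,y)\in\mathcal{A}\times\mathcal{B}:f(x,y)=v}P^{(2)}(x,y)\quad\forall v\in\mathcal{V}.$$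
   Context: Finite alphabets. Types: $P_{\mathbf{s}}(s)=|\{i:s_i=s\}|/n$; $\mathcal{P}_n(\cdot)$ is the set of types of length-$n$ sequences. $f_n^{\mathsf t}(\mathbf{x},\mathbf{y})$ is the type of $(f(x_1,y_1),\dots,f(x_n,y_n))$. For $\mathcal{A}\times\mathcal{B}\subseteq\mathcal{X}\times\mathcal{Y}$, a simple loop is a set $\{(a_0,b_0),(a_0,b_1),(a_1,b_1),(a_1,b_2),\dots,(a_{k-2},b_{k-1}),(a_{k-1},b_{k-1}),(a_{k-1},b_0)\}\subseteq(\mathcal{A}\times\mathcal{B})\cap\mathcal{S}$ with the $a_i$ pairwise distinct and the $b_i$ pairwise distinct. For $v\in\mathcal{V}$ let $\mathcal{I}_+(v)=\{i: f(a_i,b_i)=v\}$ and $\mathcal{I}_-(v)=\{i: f(a_i,b_{i+1\bmod k})=v\}$. $\mathcal{A}\times\mathcal{B}$ is solvable for $(\mathcal{S},f)$ if every simple loop in it satisfies $|\mathcal{I}_+(v)|=|\mathcal{I}_-(v)|$ for all $v\in\mathcal{V}$. *)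

theory Defs
  imports Complex_Main
begin

definition tp :: "'a list \<Rightarrow> 'a \<Rightarrow> real" where
  "tp s a = real (count_list s a) / real (length s)"

definition types :: "nat \<Rightarrow> 'a set \<Rightarrow> ('a \<Rightarrow> real) set" where
  "types n C = {tp s | s. length s = n \<and> set s \<subseteq> C}"

definition supp :: "('a \<Rightarrow> real) \<Rightarrow> 'a set" where
  "supp P = {a. P a \<noteq> 0}"

definition simple_loop ::
  "'x set \<Rightarrow> 'y set \<Rightarrow> ('x \<times> 'y) set \<Rightarrow> nat \<Rightarrow> (nat \<Rightarrow> 'x) \<Rightarrow> (nat \<Rightarrow> 'y) \<Rightarrow> bool" where
  "simple_loop A B S k a b \<longleftrightarrow>
     k \<ge> 1 \<and> inj_on a {..<k} \<and> inj_on b {..<k} \<and>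
     (\<forall>i<k. (a i, b i) \<in> (A \<times> B) \<inter> S \<and> (a i, b ((i + 1) mod k)) \<in> (A \<times> B) \<inter> S)"

definition solvable ::
  "'x set \<Rightarrow> 'y set \<Rightarrow> ('x \<times> 'y) set \<Rightarrow> ('x \<Rightarrow> 'y \<Rightarrow> 'v) \<Rightarrow> bool" where
  "solvable A B S f \<longleftrightarrow>
     (\<forall>k a b. simple_loop A B S k a b \<longrightarrow>
        (\<forall>v. card {i. i < k \<and> f (a i) (b i) = v} =
             card {i. i < k \<and> f (a i) (b ((i + 1) mod k)) = v}))"

end

theory Submission
  imports Defs
begin

text \<open>
  Scaling the two joint types by n turns their difference into an integer matrix D with zero
  row and column sums, supported in \<open>(A \<times> B) \<inter> S\<close>. A nonzero such D contains an
  alternating cycle: a simple loop whose entries \<open>(a i, b i)\<close> are positive and whose entries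
  \<open>(a i, b (i + 1))\<close> are negative. Subtracting the signed indicator of the loop keeps the
  margins and the support and strictly decreases \<open>\<Sum>|D|\<close>, and by solvability the indicator
  has zero mass on every level set of f. Induction on \<open>\<Sum>|D|\<close> shows that every level set
  of f has zero D-mass.
\<close>

lemma sum_rotate:
  fixes k :: nat
  shows "(\<Sum>i<k. g ((i + 1) mod k)) = (\<Sum>i<k. g i)"
proof (cases k)
  case 0
  then show ?thesis by simp
next
  case (Suc m)
  have "(\<Sum>i<k. g ((i + 1) mod k)) = (\<Sum>i<m. g (Suc i)) + g 0"
    using Suc by (simp add: mod_Suc)
  also have "\<dots> = (\<Sum>i<k. g i)"
    unfolding Suc sum.lessThan_Suc_shift by (rule add.commute)
  finally show ?thesis .
qed

lemma sum_eq_0_imp_exists_pos: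
  fixes g :: "'a \<Rightarrow> 'b::linordered_ab_group_add"
  assumes "finite I" "sum g I = 0" "j \<in> I" "g j < 0"
  shows "\<exists>i\<in>I. g i > 0"
proof (rule ccontr)
  assume "\<not> ?thesis"
  then have "sum g I < 0"
    using assms by (intro sum_strict_mono_ex1[of I g "\<lambda>_. 0", simplified]) (auto simp: not_less)
  with assms show False by simp
qed

lemma sum_eq_0_imp_exists_neg:
  fixes g :: "'a \<Rightarrow> 'b::linordered_ab_group_add"
  assumes "finite I" "sum g I = 0" "j \<in> I" "g j > 0"
  shows "\<exists>i\<in>I. g i < 0"
  using sum_eq_0_imp_exists_pos[of I "\<lambda>i. - g i" j] assms by (simp add: sum_negf)

lemma periodic_point_with_injective_orbit:
  fixes h :: "'a \<Rightarrow> 'a"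
  assumes "finite Y" "y0 \<in> Y" "h ` Y \<subseteq> Y"
  obtains z k where "z \<in> Y" "k > 0" "(h ^^ k) z = z" "inj_on (\<lambda>i. (h ^^ i) z) {..<k}"
proof -
  have orbit: "(h ^^ i) y \<in> Y" if "y \<in> Y" for i y
    using that assms(3) by (induction i) auto
  have "\<not> inj (\<lambda>i. (h ^^ i) y0)"
  proof
    assume "inj (\<lambda>i. (h ^^ i) y0)"
    moreover have "range (\<lambda>i. (h ^^ i) y0) \<subseteq> Y" using orbit assms(2) by auto
    ultimately show False
      using assms(1) finite_imageD finite_subset infinite_UNIV_nat by metis
  qed
  then obtain i j where ij: "i < j" "(h ^^ i) y0 = (h ^^ j) y0"
    unfolding inj_def by (metis linorder_neq_iff)
  define z where "z = (h ^^ i) y0"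
  have "(h ^^ (j - i)) z = (h ^^ (j - i + i)) y0"
    by (simp add: z_def funpow_add)
  then have "(h ^^ (j - i)) z = z"
    using ij by (simp add: z_def)
  then have ex: "\<exists>k>0. (h ^^ k) z = z"
    using ij by (intro exI[of _ "j - i"]) auto
  define k where "k = (LEAST k. k > 0 \<and> (h ^^ k) z = z)"
  have k: "k > 0" "(h ^^ k) z = z"
    using LeastI_ex[OF ex] by (simp_all add: k_def)
  have "inj_on (\<lambda>i. (h ^^ i) z) {..<k}"
  proof (rule linorder_inj_onI')
    fix s t assume st: "s \<in> {..<k}" "t \<in> {..<k}" "s < t"
    show "(h ^^ s) z \<noteq> (h ^^ t) z"
    proof
      assume eq: "(h ^^ s) z = (h ^^ t) z"
      have "k - (t - s) = (k - t) + s" "k = (k - t) + t"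
        using st by auto
      then have "(h ^^ (k - (t - s))) z = (h ^^ (k - t)) ((h ^^ t) z)"
        using eq by (metis comp_apply funpow_add)
      also have "\<dots> = z"
        using \<open>k = (k - t) + t\<close> k(2) by (metis comp_apply funpow_add)
      finally have "(h ^^ (k - (t - s))) z = z" .
      moreover have "k - (t - s) < k" "k - (t - s) > 0"
        using st by auto
      ultimately show False
        using not_less_Least[of "k - (t - s)" "\<lambda>k. k > 0 \<and> (h ^^ k) z = z"] k_def by blast
    qed
  qed
  then show ?thesis
    using that[of z k] k orbit assms(2) by (simp add: z_def)
qed

lemma Suc_mod_eq_if: "i < (k::nat) \<Longrightarrow> Suc i mod k = (if Suc i = k then 0 else Suc i)"
  by auto

definition alternating_cycle ::
  "('x \<times> 'y \<Rightarrow> int) \<Rightarrow> nat \<Rightarrow> (nat \<Rightarrow> 'x) \<Rightarrow> (nat \<Rightarrow> 'y) \<Rightarrow> bool" where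
  "alternating_cycle D k a b \<longleftrightarrow>
     k > 0 \<and> inj_on a {..<k} \<and> inj_on b {..<k} \<and>
     (\<forall>i<k. D (a i, b i) > 0 \<and> D (a i, b ((i + 1) mod k)) < 0)"

lemma alternating_cycle_exists:
  fixes D :: "'x::finite \<times> 'y::finite \<Rightarrow> int"
  assumes rows: "\<And>x. (\<Sum>y\<in>UNIV. D (x, y)) = 0"
    and cols: "\<And>y. (\<Sum>x\<in>UNIV. D (x, y)) = 0"
    and nonzero: "D p \<noteq> 0"
  obtains k a b where "alternating_cycle D k a b"
proof -
  \<comment> \<open>From a column y with a negative entry step to a positive entry \<open>pos y\<close> of that column,
    then to a negative entry \<open>neg (pos y)\<close> of its row; a periodic orbit of \<open>neg \<circ> pos\<close>
    closes up into the cycle.\<close>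
  have row_neg: "\<exists>y. D (x, y) < 0" if "D (x, y') > 0" for x y'
    using sum_eq_0_imp_exists_neg[of UNIV "\<lambda>y. D (x, y)" y'] rows that by auto
  have col_pos: "\<exists>x. D (x, y) > 0" if "D (x', y) < 0" for x' y
    using sum_eq_0_imp_exists_pos[of UNIV "\<lambda>x. D (x, y)" x'] cols that by auto
  define Y where "Y = {y. \<exists>x. D (x, y) < 0}"
  define pos where "pos y = (SOME x. D (x, y) > 0)" for y
  define neg where "neg x = (SOME y. D (x, y) < 0)" for x
  have pos: "D (pos y, y) > 0" if "y \<in> Y" for y
  proof -
    have "\<exists>x. D (x, y) > 0" using that col_pos unfolding Y_def by blast
    then show ?thesis unfolding pos_def by (rule someI_ex)
  qed
  have neg: "D (x, neg x) < 0" if "D (x, y) > 0" for x y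
    using row_neg[OF that] unfolding neg_def by (rule someI_ex)
  have "Y \<noteq> {}"
  proof (cases "D p < 0")
    case True
    then show ?thesis unfolding Y_def by (cases p) auto
  next
    case False
    then have "D (fst p, snd p) > 0" using nonzero by simp
    then show ?thesis using row_neg unfolding Y_def by blast
  qed
  then obtain y0 where "y0 \<in> Y" by auto
  have "(neg \<circ> pos) ` Y \<subseteq> Y"
    using pos neg unfolding Y_def by fastforce
  then obtain z k where z: "z \<in> Y" "k > 0" "((neg \<circ> pos) ^^ k) z = z"
    and inj_b: "inj_on (\<lambda>i. ((neg \<circ> pos) ^^ i) z) {..<k}"
    using periodic_point_with_injective_orbit[of Y y0 "neg \<circ> pos"] \<open>y0 \<in> Y\<close> by auto
  define b where "b i = ((neg \<circ> pos) ^^ i) z" for i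
  define a where "a i = pos (b i)" for i
  have b_in: "b i \<in> Y" for i
  proof (induction i)
    case (Suc i)
    then show ?case
      using \<open>(neg \<circ> pos) ` Y \<subseteq> Y\<close> unfolding b_def by (simp add: image_subset_iff)
  qed (simp add: b_def z(1))
  have b_Suc: "b (Suc i) = neg (a i)" for i
    unfolding a_def b_def by simp
  have "b k = b 0"
    using z(3) by (simp add: b_def)
  have b_next: "b ((i + 1) mod k) = neg (a i)" if "i < k" for i
    using Suc_mod_eq_if[OF that] b_Suc[of i] \<open>b k = b 0\<close> by auto
  have pos_a: "D (a i, b i) > 0" for i
    unfolding a_def using pos[OF b_in] .
  have neg_a: "D (a i, b ((i + 1) mod k)) < 0" if "i < k" for i
    unfolding b_next[OF that] using neg[OF pos_a] .
  have inj_a: "inj_on a {..<k}"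
  proof (rule inj_onI)
    fix s t assume st: "s \<in> {..<k}" "t \<in> {..<k}" "a s = a t"
    then have "b ((s + 1) mod k) = b ((t + 1) mod k)" using b_next by simp
    then have "(s + 1) mod k = (t + 1) mod k"
      using inj_b z(2) unfolding b_def inj_on_def by simp
    then show "s = t"
      using st Suc_mod_eq_if[of s k] Suc_mod_eq_if[of t k] by (auto split: if_splits)
  qed
  show ?thesis
    using that[of k a b] z(2) inj_a inj_b pos_a neg_a
    unfolding alternating_cycle_def b_def by auto
qed

lemma card_rotate:
  fixes k :: nat
  shows "card {i. i < k \<and> P ((i + 1) mod k)} = card {i. i < k \<and> P i}"
  using sum_rotate[of "\<lambda>i. of_bool (P i) :: nat" k] by (simp add: Int_def lessThan_def)

definition occurrences :: "(nat \<Rightarrow> 'a) \<Rightarrow> nat \<Rightarrow> 'a \<Rightarrow> int" where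
  "occurrences e k p = (\<Sum>i<k. of_bool (e i = p))"

lemma sum_occurrences:
  assumes "finite T"
  shows "(\<Sum>p\<in>T. occurrences e k p) = int (card {i. i < k \<and> e i \<in> T})"
proof -
  have "(\<Sum>p\<in>T. occurrences e k p) = (\<Sum>i<k. \<Sum>p\<in>T. of_bool (e i = p))"
    unfolding occurrences_def by (rule sum.swap)
  also have "\<dots> = (\<Sum>i<k. of_bool (e i \<in> T))"
    using assms by (simp add: of_bool_def)
  also have "\<dots> = int (card {i. i < k \<and> e i \<in> T})"
    by (simp add: Int_def)
  finally show ?thesis .
qed

lemma occurrences_row_sum:
  "(\<Sum>y\<in>UNIV. occurrences e k (x, y :: 'y::finite)) = int (card {i. i < k \<and> fst (e i) = x})"
proof -
  have "(\<Sum>y\<in>UNIV. occurrences e k (x, y)) = (\<Sum>p\<in>Pair x ` UNIV. occurrences e k p)"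
    by (simp add: sum.reindex inj_on_def)
  also have "\<dots> = int (card {i. i < k \<and> fst (e i) = x})"
    using sum_occurrences[of "range (Pair x)" e k] by (simp add: image_iff prod_eq_iff)
  finally show ?thesis .
qed

lemma occurrences_col_sum:
  "(\<Sum>x\<in>UNIV. occurrences e k (x :: 'x::finite, y)) = int (card {i. i < k \<and> snd (e i) = y})"
proof -
  have "(\<Sum>x\<in>UNIV. occurrences e k (x, y)) = (\<Sum>p\<in>(\<lambda>x. (x, y)) ` UNIV. occurrences e k p)"
    by (simp add: sum.reindex inj_on_def)
  also have "\<dots> = int (card {i. i < k \<and> snd (e i) = y})"
    using sum_occurrences[of "range (\<lambda>x. (x, y))" e k] by (simp add: image_iff prod_eq_iff)
  finally show ?thesis .
qed

lemma occurrences_inj_on: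
  assumes "inj_on e {..<k}"
  shows "occurrences e k p = of_bool (p \<in> e ` {..<k})"
proof (cases "p \<in> e ` {..<k}")
  case True
  then obtain j where j: "j < k" "p = e j" by auto
  then have "{i. i < k \<and> e i \<in> {p}} = {j}"
    using assms by (auto simp: inj_on_def)
  then show ?thesis
    using True sum_occurrences[of "{p}" e k] by simp
next
  case False
  then have "{i. i < k \<and> e i \<in> {p}} = {}" by auto
  then show ?thesis
    using False sum_occurrences[of "{p}" e k] by simp
qed

definition loop_flow :: "nat \<Rightarrow> (nat \<Rightarrow> 'x) \<Rightarrow> (nat \<Rightarrow> 'y) \<Rightarrow> 'x \<times> 'y \<Rightarrow> int" where
  "loop_flow k a b p =
     occurrences (\<lambda>i. (a i, b i)) k p - occurrences (\<lambda>i. (a i, b ((i + 1) mod k))) k p"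

lemma loop_flow_row_sum: "(\<Sum>y\<in>UNIV. loop_flow k a b (x, y :: 'y::finite)) = 0"
  unfolding loop_flow_def by (simp add: sum_subtractf occurrences_row_sum)

lemma loop_flow_col_sum: "(\<Sum>x\<in>UNIV. loop_flow k a b (x :: 'x::finite, y)) = 0"
  using card_rotate[of k "\<lambda>j. b j = y"] unfolding loop_flow_def
  by (simp add: sum_subtractf occurrences_col_sum)

lemma sum_loop_flow:
  assumes "finite T"
  shows "(\<Sum>p\<in>T. loop_flow k a b p) =
    int (card {i. i < k \<and> (a i, b i) \<in> T}) - int (card {i. i < k \<and> (a i, b ((i + 1) mod k)) \<in> T})"
  unfolding loop_flow_def using assms by (simp add: sum_subtractf sum_occurrences)

lemma loop_flow_alternating_cycle:
  assumes "alternating_cycle D k a b"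
  shows "loop_flow k a b p =
    of_bool (\<exists>i<k. p = (a i, b i)) - of_bool (\<exists>i<k. p = (a i, b ((i + 1) mod k)))"
proof -
  have "inj_on a {..<k}" using assms unfolding alternating_cycle_def by blast
  then have "inj_on (\<lambda>i. (a i, b i)) {..<k}" "inj_on (\<lambda>i. (a i, b ((i + 1) mod k))) {..<k}"
    by (auto simp: inj_on_def)
  then show ?thesis
    unfolding loop_flow_def by (auto simp: occurrences_inj_on image_iff)
qed

lemma abs_minus_loop_flow:
  assumes "alternating_cycle D k a b"
  shows "\<bar>D p - loop_flow k a b p\<bar> = \<bar>D p\<bar> - \<bar>loop_flow k a b p\<bar>"
proof -
  have signs: "\<forall>i<k. D (a i, b i) > 0 \<and> D (a i, b ((i + 1) mod k)) < 0"
    using assms unfolding alternating_cycle_def by blast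
  then have "\<not> ((\<exists>i<k. p = (a i, b i)) \<and> (\<exists>i<k. p = (a i, b ((i + 1) mod k))))"
    by (metis less_asym)
  then show ?thesis
    using signs unfolding loop_flow_alternating_cycle[OF assms] by auto
qed

lemma loop_flow_nonzero_imp_nonzero:
  assumes "alternating_cycle D k a b" "loop_flow k a b p \<noteq> 0"
  shows "D p \<noteq> 0"
  using abs_minus_loop_flow[OF assms(1), of p] assms(2) by auto

lemma sum_abs_minus_loop_flow_less:
  fixes D :: "'x::finite \<times> 'y::finite \<Rightarrow> int"
  assumes "alternating_cycle D k a b"
  shows "(\<Sum>p\<in>UNIV. \<bar>D p - loop_flow k a b p\<bar>) < (\<Sum>p\<in>UNIV. \<bar>D p\<bar>)"
proof -
  have "k > 0" "D (a 0, b 0) > 0" "\<forall>i<k. D (a i, b ((i + 1) mod k)) < 0"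
    using assms unfolding alternating_cycle_def by auto
  then have "\<not> (\<exists>i<k. (a 0, b 0) = (a i, b ((i + 1) mod k)))"
    by (metis less_asym)
  then have "loop_flow k a b (a 0, b 0) \<noteq> 0"
    unfolding loop_flow_alternating_cycle[OF assms] using \<open>k > 0\<close> by auto
  then have "0 < (\<Sum>p\<in>UNIV. \<bar>loop_flow k a b p\<bar>)"
    by (intro sum_pos2[of UNIV "(a 0, b 0)"]) auto
  then show ?thesis
    by (simp add: abs_minus_loop_flow[OF assms] sum_subtractf)
qed

lemma alternating_cycle_simple_loop:
  assumes "alternating_cycle D k a b" "\<forall>p. D p \<noteq> 0 \<longrightarrow> p \<in> (A \<times> B) \<inter> S"
  shows "simple_loop A B S k a b"
proof -
  have "D (a i, b i) \<noteq> 0" "D (a i, b ((i + 1) mod k)) \<noteq> 0" if "i < k" for i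
    using assms(1) that unfolding alternating_cycle_def by fastforce+
  then show ?thesis
    using assms unfolding alternating_cycle_def simple_loop_def by (auto simp: Suc_le_eq)
qed

lemma solvable_level_set_sum_loop_flow:
  fixes A :: "'x::finite set" and B :: "'y::finite set"
  assumes "solvable A B S f" "simple_loop A B S k a b"
  shows "(\<Sum>p\<in>{p \<in> A \<times> B. f (fst p) (snd p) = v}. loop_flow k a b p) = 0"
proof -
  have "(a i, b i) \<in> A \<times> B" "(a i, b ((i + 1) mod k)) \<in> A \<times> B" if "i < k" for i
    using assms(2) that unfolding simple_loop_def by auto
  then have "{i. i < k \<and> (a i, b i) \<in> {p \<in> A \<times> B. f (fst p) (snd p) = v}} =
      {i. i < k \<and> f (a i) (b i) = v}"
    "{i. i < k \<and> (a i, b ((i + 1) mod k)) \<in> {p \<in> A \<times> B. f (fst p) (snd p) = v}} =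
      {i. i < k \<and> f (a i) (b ((i + 1) mod k)) = v}"
    by auto
  then show ?thesis
    using assms unfolding solvable_def by (simp add: sum_loop_flow)
qed

lemma solvable_level_set_sum_eq_0:
  fixes D :: "'x::finite \<times> 'y::finite \<Rightarrow> int"
  assumes "solvable A B S f"
    and "\<forall>p. D p \<noteq> 0 \<longrightarrow> p \<in> (A \<times> B) \<inter> S"
    and "\<forall>x. (\<Sum>y\<in>UNIV. D (x, y)) = 0" "\<forall>y. (\<Sum>x\<in>UNIV. D (x, y)) = 0"
  shows "(\<Sum>p\<in>{p \<in> A \<times> B. f (fst p) (snd p) = v}. D p) = 0"
  using assms(2-4)
proof (induction "nat (\<Sum>p\<in>UNIV. \<bar>D p\<bar>)" arbitrary: D rule: less_induct)
  case less
  show ?case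
  proof (cases "\<exists>p. D p \<noteq> 0")
    case False
    then have "D = (\<lambda>_. 0)" by auto
    then show ?thesis by simp
  next
    case True
    then obtain p where "D p \<noteq> 0" ..
    then obtain k a b where cycle: "alternating_cycle D k a b"
      using alternating_cycle_exists[of D] less.prems(2,3) by blast
    define D' where "D' p = D p - loop_flow k a b p" for p
    have "0 \<le> (\<Sum>p\<in>UNIV. \<bar>D' p\<bar>)"
      by (rule sum_nonneg) simp
    moreover have "(\<Sum>p\<in>UNIV. \<bar>D' p\<bar>) < (\<Sum>p\<in>UNIV. \<bar>D p\<bar>)"
      using sum_abs_minus_loop_flow_less[OF cycle] unfolding D'_def .
    ultimately have "nat (\<Sum>p\<in>UNIV. \<bar>D' p\<bar>) < nat (\<Sum>p\<in>UNIV. \<bar>D p\<bar>)"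
      using nat_less_eq_zless by blast
    moreover have "\<forall>p. D' p \<noteq> 0 \<longrightarrow> p \<in> (A \<times> B) \<inter> S"
    proof (intro allI impI)
      fix p assume "D' p \<noteq> 0"
      then have "D p \<noteq> 0 \<or> loop_flow k a b p \<noteq> 0" unfolding D'_def by auto
      then show "p \<in> (A \<times> B) \<inter> S"
        using loop_flow_nonzero_imp_nonzero[OF cycle] less.prems(1) by blast
    qed
    moreover have "\<forall>x. (\<Sum>y\<in>UNIV. D' (x, y)) = 0" "\<forall>y. (\<Sum>x\<in>UNIV. D' (x, y)) = 0"
      using less.prems(2,3) unfolding D'_def
      by (simp_all add: sum_subtractf loop_flow_row_sum loop_flow_col_sum)
    ultimately have "(\<Sum>p\<in>{p \<in> A \<times> B. f (fst p) (snd p) = v}. D' p) = 0"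
      by (rule less.hyps)
    moreover have "(\<Sum>p\<in>{p \<in> A \<times> B. f (fst p) (snd p) = v}. loop_flow k a b p) = 0"
      using alternating_cycle_simple_loop[OF cycle less.prems(1)]
      by (rule solvable_level_set_sum_loop_flow[OF assms(1)])
    ultimately show ?thesis
      unfolding D'_def by (simp add: sum_subtractf)
  qed
qed

lemma row_sum_UNIV_eq_0:
  fixes D :: "'x \<times> 'y::finite \<Rightarrow> 'c::comm_monoid_add"
  assumes "\<forall>p. D p \<noteq> 0 \<longrightarrow> p \<in> A \<times> B" "\<forall>x\<in>A. (\<Sum>y\<in>B. D (x, y)) = 0"
  shows "(\<Sum>y\<in>UNIV. D (x, y)) = 0"
proof (cases "x \<in> A")
  case True
  have "(\<Sum>y\<in>UNIV. D (x, y)) = (\<Sum>y\<in>B. D (x, y))"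
    using assms(1) by (intro sum.mono_neutral_right) auto
  then show ?thesis using assms(2) True by simp
next
  case False
  then have "\<And>z. D (x, z) = 0" using assms(1) by blast
  then show ?thesis by simp
qed

lemma col_sum_UNIV_eq_0:
  fixes D :: "'x::finite \<times> 'y \<Rightarrow> 'c::comm_monoid_add"
  assumes "\<forall>p. D p \<noteq> 0 \<longrightarrow> p \<in> A \<times> B" "\<forall>y\<in>B. (\<Sum>x\<in>A. D (x, y)) = 0"
  shows "(\<Sum>x\<in>UNIV. D (x, y)) = 0"
proof (cases "y \<in> B")
  case True
  have "(\<Sum>x\<in>UNIV. D (x, y)) = (\<Sum>x\<in>A. D (x, y))"
    using assms(1) by (intro sum.mono_neutral_right) auto
  then show ?thesis using assms(2) True by simp
next
  case False
  then have "\<And>z. D (z, y) = 0" using assms(1) by blast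
  then show ?thesis by simp
qed

lemma types_0: "P \<in> types 0 C \<Longrightarrow> P = (\<lambda>_. 0)"
  by (auto simp: types_def tp_def)

lemma types_support: "P \<in> types n C \<Longrightarrow> P p \<noteq> 0 \<Longrightarrow> p \<in> C"
  by (auto simp: types_def tp_def count_list_0_iff)

lemma types_diff_scaled_int:
  assumes "P1 \<in> types n C" "P2 \<in> types n C"
  obtains D :: "'a \<Rightarrow> int" where "\<And>p. real_of_int (D p) = real n * (P1 p - P2 p)"
proof -
  obtain s1 s2 where s: "P1 = tp s1" "length s1 = n" "P2 = tp s2" "length s2 = n"
    using assms unfolding types_def by auto
  show ?thesis
  proof (rule that[of "\<lambda>p. int (count_list s1 p) - int (count_list s2 p)"])
    fix p
    show "real_of_int (int (count_list s1 p) - int (count_list s2 p)) = real n * (P1 p - P2 p)"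
      using s by (cases "n = 0") (simp_all add: tp_def field_simps)
  qed
qed

lemma joint_types_diff_int_matrix:
  fixes P1 P2 :: "'x::finite \<times> 'y::finite \<Rightarrow> real"
  assumes types: "P1 \<in> types n (A \<times> B)" "P2 \<in> types n (A \<times> B)"
    and supp: "supp P1 \<subseteq> S" "supp P2 \<subseteq> S"
    and rows: "\<forall>x\<in>A. (\<Sum>y\<in>B. P1 (x, y)) = (\<Sum>y\<in>B. P2 (x, y))"
    and cols: "\<forall>y\<in>B. (\<Sum>x\<in>A. P1 (x, y)) = (\<Sum>x\<in>A. P2 (x, y))"
  obtains D :: "'x \<times> 'y \<Rightarrow> int"
  where "\<And>p. real_of_int (D p) = real n * (P1 p - P2 p)"
    and "\<forall>p. D p \<noteq> 0 \<longrightarrow> p \<in> (A \<times> B) \<inter> S"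
    and "\<forall>x. (\<Sum>y\<in>UNIV. D (x, y)) = 0" "\<forall>y. (\<Sum>x\<in>UNIV. D (x, y)) = 0"
proof -
  obtain D :: "'x \<times> 'y \<Rightarrow> int" where D: "\<And>p. real_of_int (D p) = real n * (P1 p - P2 p)"
    using types_diff_scaled_int[OF types] by blast
  have D_sum: "real_of_int (\<Sum>i\<in>I. D (g i)) = real n * ((\<Sum>i\<in>I. P1 (g i)) - (\<Sum>i\<in>I. P2 (g i)))"
    for I and g :: "'i \<Rightarrow> 'x \<times> 'y"
    by (simp add: D sum_distrib_left sum_subtractf right_diff_distrib)
  have supp_D: "\<forall>p. D p \<noteq> 0 \<longrightarrow> p \<in> (A \<times> B) \<inter> S"
  proof (intro allI impI)
    fix p assume "D p \<noteq> 0"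
    then have "P1 p \<noteq> 0 \<or> P2 p \<noteq> 0" using D[of p] by auto
    then show "p \<in> (A \<times> B) \<inter> S"
      using types_support[OF types(1)] types_support[OF types(2)] supp unfolding supp_def by blast
  qed
  then have supp_AB: "\<forall>p. D p \<noteq> 0 \<longrightarrow> p \<in> A \<times> B"
    by blast
  have rows_D: "\<forall>x\<in>A. (\<Sum>y\<in>B. D (x, y)) = 0"
  proof
    fix x assume "x \<in> A"
    then have "real_of_int (\<Sum>y\<in>B. D (x, y)) = 0"
      using D_sum[of "Pair x" B] rows by simp
    then show "(\<Sum>y\<in>B. D (x, y)) = 0" by (simp only: of_int_eq_0_iff)
  qed
  have cols_D: "\<forall>y\<in>B. (\<Sum>x\<in>A. D (x, y)) = 0"
  proof
    fix y assume "y \<in> B"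
    then have "real_of_int (\<Sum>x\<in>A. D (x, y)) = 0"
      using D_sum[of "\<lambda>x. (x, y)" A] cols by simp
    then show "(\<Sum>x\<in>A. D (x, y)) = 0" by (simp only: of_int_eq_0_iff)
  qed
  show ?thesis
  proof (rule that[OF D supp_D])
    show "\<forall>x. (\<Sum>y\<in>UNIV. D (x, y)) = 0"
      using row_sum_UNIV_eq_0[OF supp_AB rows_D] by blast
    show "\<forall>y. (\<Sum>x\<in>UNIV. D (x, y)) = 0"
      using col_sum_UNIV_eq_0[OF supp_AB cols_D] by blast
  qed
qed

theorem lemma2:
  fixes S :: "('x::finite \<times> 'y::finite) set"
    and f :: "'x \<Rightarrow> 'y \<Rightarrow> 'v"
    and A :: "'x set" and B :: "'y set"
    and n :: nat and xs :: "'x list" and ys :: "'y list"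
    and P1 P2 :: "'x \<times> 'y \<Rightarrow> real"
  assumes "solvable A B S f"
    and "length xs = n" and "length ys = n"
    and "set xs \<subseteq> A" and "set ys \<subseteq> B"
    and "\<forall>i<n. (xs ! i, ys ! i) \<in> S"
    and "P1 \<in> types n (A \<times> B)" and "P2 \<in> types n (A \<times> B)"
    and "supp P1 \<subseteq> S" and "supp P2 \<subseteq> S"
    and "\<forall>x\<in>A. (\<Sum>y\<in>B. P1 (x, y)) = tp xs x"
    and "\<forall>y\<in>B. (\<Sum>x\<in>A. P1 (x, y)) = tp ys y"
    and "\<forall>x\<in>A. (\<Sum>y\<in>B. P2 (x, y)) = tp xs x"
    and "\<forall>y\<in>B. (\<Sum>x\<in>A. P2 (x, y)) = tp ys y"
  shows "\<forall>v. (\<Sum>p\<in>{p \<in> A \<times> B. f (fst p) (snd p) = v}. P1 p)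
            = (\<Sum>p\<in>{p \<in> A \<times> B. f (fst p) (snd p) = v}. P2 p)"
  \<comment> \<open>The sequences xs and ys enter only through the common margins tp xs and tp ys.\<close>
proof
  fix v
  let ?T = "{p \<in> A \<times> B. f (fst p) (snd p) = v}"
  have margins: "\<forall>x\<in>A. (\<Sum>y\<in>B. P1 (x, y)) = (\<Sum>y\<in>B. P2 (x, y))"
    "\<forall>y\<in>B. (\<Sum>x\<in>A. P1 (x, y)) = (\<Sum>x\<in>A. P2 (x, y))"
    using assms(11-14) by simp_all
  obtain D :: "'x \<times> 'y \<Rightarrow> int" where D: "\<And>p. real_of_int (D p) = real n * (P1 p - P2 p)"
    and D_flow: "\<forall>p. D p \<noteq> 0 \<longrightarrow> p \<in> (A \<times> B) \<inter> S"
      "\<forall>x. (\<Sum>y\<in>UNIV. D (x, y)) = 0" "\<forall>y. (\<Sum>x\<in>UNIV. D (x, y)) = 0"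
    using joint_types_diff_int_matrix[OF assms(7-10) margins] by blast
  have "real_of_int (\<Sum>p\<in>?T. D p) = real n * (sum P1 ?T - sum P2 ?T)"
    by (simp add: D sum_distrib_left sum_subtractf right_diff_distrib)
  then have "real n * (sum P1 ?T - sum P2 ?T) = 0"
    using solvable_level_set_sum_eq_0[OF assms(1) D_flow, of v] by simp
  then show "sum P1 ?T = sum P2 ?T"
    using types_0[of P1 "A \<times> B"] types_0[of P2 "A \<times> B"] assms(7,8) by (cases "n = 0") auto
qed

end
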